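(* Let $p,r,n$ be natural numbers with $p+r\le n$, and let $\sigma$ be the involution of $\mathrm{Match}(\mathcal G_n)_{p,r}$ induced by reflecting $\mathcal G_n$ across its vertical axis of symmetry. Then $$\binom{n-r}{p}_{-1}\binom{n+1-p}{r}_{-1}=\big|\{P\in\mathrm{Match}(\mathcal G_n)_{p,r}:\sigma(P)=P\}\big|.$$
   Context: $\mathcal G_n$ ($n\ge0$) is a horizontal row of $2n+1$ unit square tiles $G_{-n},\dots,G_n$ (left to right, consecutive tiles sharing a vertical edge), where $G_i$ has face weight $1$ if $i+n$ is even and $2$ if $i+n$ is odd. $P_{min}$ is the perfect matching consisting of the top and bottom edges of all tiles of face weight $1$. For a perfect matching $P$, $\mathrm{Twist}(P)$ is the set of tiles in the interior of cycles of $P\triangle P_{min}$, and $y_i(P)$ the number of twisted tiles of face weight $i$. $\mathrm{Match}(\mathcal G_n)_{p,r}$ is the set of perfect matchings $P$ with $y_1(P)=n+1-r$ and $y_2(P)=p$; the reflection preserves $y_1,y_2$ and hence restricts to an involution $\sigma$ of this set. $\binom nk_{-1}$ is the value at $q=-1$ of the Gaussian binomial $\frac{(n)_q!}{(k)_q!(n-k)_q!}$, $(n)_q=1+q+\dots+q^{n-1}$. *)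

theory Defs
  imports "HOL-Computational_Algebra.Polynomial"
begin

definition qint :: "nat \<Rightarrow> real poly" where
  "qint m = (\<Sum>i<m. monom 1 i)"

definition qfact :: "nat \<Rightarrow> real poly" where
  "qfact m = (\<Prod>i\<in>{1..m}. qint i)"

definition gauss_binom_poly :: "nat \<Rightarrow> nat \<Rightarrow> real poly" where
  "gauss_binom_poly m k =
     (if k \<le> m then qfact m div (qfact k * qfact (m - k)) else 0)"

definition gauss_binom_m1 :: "nat \<Rightarrow> nat \<Rightarrow> real" where
  "gauss_binom_m1 m k = poly (gauss_binom_poly m k) (-1)"

(* The snake graph G_n: a horizontal row of 2n+1 unit tiles.
   Tile j (0 \<le> j \<le> 2n) is the square [j,j+1]x[0,1]; it is the paper's tile G_{j-n},
   so it has face weight 1 iff j is even. *)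
type_synonym vert = "nat \<times> nat"
type_synonym edge = "vert set"

definition verts :: "nat \<Rightarrow> vert set" where
  "verts n = {(x,y). x \<le> 2*n+1 \<and> y \<le> 1}"

definition hedge :: "nat \<Rightarrow> nat \<Rightarrow> edge" where
  "hedge x y = {(x,y), (x+1,y)}"

definition vedge :: "nat \<Rightarrow> edge" where
  "vedge x = {(x,0), (x,1)}"

definition edges :: "nat \<Rightarrow> edge set" where
  "edges n = {hedge x y | x y. x \<le> 2*n \<and> y \<le> 1} \<union> {vedge x | x. x \<le> 2*n+1}"

definition perfect_matching :: "nat \<Rightarrow> edge set \<Rightarrow> bool" where
  "perfect_matching n P \<longleftrightarrow> P \<subseteq> edges n \<and> (\<forall>v\<in>verts n. \<exists>!e. e \<in> P \<and> v \<in> e)"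

definition face_weight :: "nat \<Rightarrow> nat" where
  "face_weight j = (if even j then 1 else 2)"

definition Pmin :: "nat \<Rightarrow> edge set" where
  "Pmin n = {hedge j y | j y. j \<le> 2*n \<and> y \<le> 1 \<and> face_weight j = 1}"

(* The cycle of the ladder graph bounding the block of tiles a..b
   (every cycle of G_n is of this form, and its interior is tiles a..b). *)
definition block_cycle :: "nat \<Rightarrow> nat \<Rightarrow> edge set" where
  "block_cycle a b = {vedge a, vedge (b+1)} \<union> {hedge x y | x y. a \<le> x \<and> x \<le> b \<and> y \<le> 1}"

definition symdiff :: "'a set \<Rightarrow> 'a set \<Rightarrow> 'a set" where
  "symdiff A B = (A - B) \<union> (B - A)"

definition Twist :: "nat \<Rightarrow> edge set \<Rightarrow> nat set" where
  "Twist n P = {t. t \<le> 2*n \<and> (\<exists>a b. a \<le> t \<and> t \<le> b \<and> b \<le> 2*n \<and>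
                 block_cycle a b \<subseteq> symdiff P (Pmin n))}"

definition y_count :: "nat \<Rightarrow> nat \<Rightarrow> edge set \<Rightarrow> nat" where
  "y_count n i P = card {t \<in> Twist n P. face_weight t = i}"

definition Match :: "nat \<Rightarrow> nat \<Rightarrow> nat \<Rightarrow> edge set set" where
  "Match n p r = {P. perfect_matching n P \<and> y_count n 1 P = n + 1 - r \<and> y_count n 2 P = p}"

definition reflect :: "nat \<Rightarrow> edge set \<Rightarrow> edge set" where
  "reflect n P = (\<lambda>e. (\<lambda>(x,y). (2*n+1-x, y)) ` e) ` P"

end

theory Submission
  imports Defs
begin

text \<open>A perfect matching of \<open>G\<^sub>n\<close> is determined by the set \<open>H\<close> of tiles whose top and
  bottom edges it uses, and these are exactly the sets of pairwise non-adjacent tiles. A tile is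
  twisted iff it lies in \<open>H\<close> and has weight 2, or lies outside \<open>H\<close> and has weight 1; hence
  \<open>y\<^sub>1 = n + 1 - #(weight-1 tiles of H)\<close>, \<open>y\<^sub>2 = #(weight-2 tiles of H)\<close>, and the matching
  is reflection invariant iff \<open>H\<close> is symmetric. Stripping the two outermost tiles of a
  symmetric independent set and shifting by one tile gives one for \<open>G\<^sub>n\<^sub>-\<^sub>1\<close> with the two
  weights exchanged. The resulting recursion for the counts is also satisfied by the product of
  Gaussian binomials, because at \<open>q = -1\<close> the q-Pascal rule applied twice collapses to
  \<open>[m+2, k] = [m, k] + [m, k-2]\<close>.\<close>

section \<open>Gaussian binomials at \<open>q = -1\<close>\<close>

fun qbinomial :: "nat \<Rightarrow> nat \<Rightarrow> real poly" where
  "qbinomial m 0 = 1"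
| "qbinomial 0 (Suc k) = 0"
| "qbinomial (Suc m) (Suc k) = qbinomial m k + monom 1 (Suc k) * qbinomial m (Suc k)"

lemma qbinomial_eq_0: "m < k \<Longrightarrow> qbinomial m k = 0"
proof (induction m arbitrary: k)
  case 0 then show ?case by (cases k) auto
next
  case (Suc m) then show ?case by (cases k) auto
qed

lemma qbinomial_diag: "qbinomial m m = 1"
  by (induction m) (simp_all add: qbinomial_eq_0)

lemma qint_add: "qint (a + b) = qint a + monom 1 a * qint b"
proof (induction b)
  case 0 then show ?case by (simp add: qint_def)
next
  case (Suc b)
  have "qint (a + Suc b) = qint (a + b) + monom 1 (a + b)" by (simp add: qint_def)
  also have "\<dots> = qint a + monom 1 a * (qint b + monom 1 b)"
    using Suc by (simp add: algebra_simps mult_monom)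
  also have "qint b + monom 1 b = qint (Suc b)" by (simp add: qint_def)
  finally show ?case .
qed

lemma qfact_Suc: "qfact (Suc m) = qint (Suc m) * qfact m"
  unfolding qfact_def by (simp add: prod.atLeast1_atMost_eq prod.lessThan_Suc mult.commute)

lemma qfact_eq_qbinomial: "k \<le> m \<Longrightarrow> qfact m = qbinomial m k * qfact k * qfact (m - k)"
proof (induction m arbitrary: k)
  case 0 then show ?case by (simp add: qfact_def)
next
  case (Suc m)
  show ?case
  proof (cases k)
    case 0 then show ?thesis by (simp add: qfact_def)
  next
    case (Suc j)
    with Suc.prems have "j \<le> m" by simp
    have left: "qbinomial m j * qfact (Suc j) * qfact (m - j) = qfact m * qint (Suc j)"
      using Suc.IH[OF \<open>j \<le> m\<close>] by (simp add: qfact_Suc algebra_simps)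
    have right: "monom 1 (Suc j) * qbinomial m (Suc j) * qfact (Suc j) * qfact (m - j)
                 = qfact m * (monom 1 (Suc j) * qint (m - j))"
    proof (cases "Suc j \<le> m")
      case True
      then have "m - j = Suc (m - Suc j)" by simp
      then show ?thesis using Suc.IH[OF True] by (simp add: qfact_Suc algebra_simps)
    next
      case False
      with \<open>j \<le> m\<close> have "m = j" by simp
      then show ?thesis by (simp add: qbinomial_eq_0 qint_def)
    qed
    have "qint (Suc m) = qint (Suc j) + monom 1 (Suc j) * qint (m - j)"
      using qint_add[of "Suc j" "m - j"] \<open>j \<le> m\<close> by simp
    then have "qfact (Suc m) = qfact m * qint (Suc j) + qfact m * (monom 1 (Suc j) * qint (m - j))"
      by (simp add: qfact_Suc algebra_simps)
    also have "\<dots> = qbinomial (Suc m) k * qfact k * qfact (Suc m - k)"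
      using left right Suc by (simp add: algebra_simps)
    finally show ?thesis .
  qed
qed

lemma qfact_nonzero: "qfact m \<noteq> 0"
proof -
  have "coeff (qint i) 0 = 1" if "i \<ge> 1" for i
    using that by (simp add: qint_def coeff_sum)
  then have "qint i \<noteq> 0" if "i \<ge> 1" for i
    using that by fastforce
  then show ?thesis
    unfolding qfact_def by (simp add: prod_zero_iff)
qed

lemma gauss_binom_poly_eq_qbinomial: "gauss_binom_poly m k = qbinomial m k"
proof (cases "k \<le> m")
  case True
  then show ?thesis
    using qfact_eq_qbinomial[OF True] qfact_nonzero
    by (simp add: gauss_binom_poly_def mult.assoc)
next
  case False
  then show ?thesis by (simp add: gauss_binom_poly_def qbinomial_eq_0)
qed

lemma gauss_binom_m1_eq_0: "m < k \<Longrightarrow> gauss_binom_m1 m k = 0"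
  by (simp add: gauss_binom_m1_def gauss_binom_poly_eq_qbinomial qbinomial_eq_0)

lemma gauss_binom_m1_0_right [simp]: "gauss_binom_m1 m 0 = 1"
  by (simp add: gauss_binom_m1_def gauss_binom_poly_eq_qbinomial)

lemma gauss_binom_m1_diag [simp]: "gauss_binom_m1 m m = 1"
  by (simp add: gauss_binom_m1_def gauss_binom_poly_eq_qbinomial qbinomial_diag)

lemma gauss_binom_m1_add2:
  "gauss_binom_m1 (m + 2) k = gauss_binom_m1 m k + (if 2 \<le> k then gauss_binom_m1 m (k - 2) else 0)"
proof -
  have "poly (qbinomial (Suc (Suc m)) k) (-1)
        = poly (qbinomial m k) (-1) + (if 2 \<le> k then poly (qbinomial m (k - 2)) (-1) else 0)"
  proof (cases k)
    case (Suc j)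
    then show ?thesis by (cases j) (simp_all add: poly_monom algebra_simps)
  qed simp
  then show ?thesis by (simp add: gauss_binom_m1_def gauss_binom_poly_eq_qbinomial)
qed

lemma gauss_binom_m1_product_step:
  "gauss_binom_m1 (n + 1 - a) b * gauss_binom_m1 (n + 2 - b) a
   = gauss_binom_m1 (n - b) a * gauss_binom_m1 (n + 1 - a) b
     + (if 2 \<le> a then gauss_binom_m1 (n - 1 - (a - 2)) b * gauss_binom_m1 (n - b) (a - 2) else 0)"
proof -
  consider "b \<le> n" | "b = n + 1" | "n + 1 < b" by linarith
  then show ?thesis
  proof cases
    case 1
    then have "n + 2 - b = (n - b) + 2" "2 \<le> a \<Longrightarrow> n - 1 - (a - 2) = n + 1 - a" by auto
    then show ?thesis using gauss_binom_m1_add2[of "n - b" a] by (simp add: algebra_simps)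
  next
    case 2
    then show ?thesis
      by (cases "a = 0") (auto simp: gauss_binom_m1_eq_0)
  next
    case 3
    then show ?thesis by (simp add: gauss_binom_m1_eq_0)
  qed
qed

section \<open>Symmetric independent sets of a path\<close>

definition path_indep :: "nat \<Rightarrow> nat set \<Rightarrow> bool" where
  "path_indep n H \<longleftrightarrow> H \<subseteq> {..2*n} \<and> (\<forall>x\<in>H. Suc x \<notin> H)"

definition sym_indep :: "nat \<Rightarrow> nat set set" where
  "sym_indep n = {H. path_indep n H \<and> (\<forall>x\<in>H. 2*n - x \<in> H)}"

definition even_count :: "nat set \<Rightarrow> nat" where
  "even_count H = card {x\<in>H. even x}"

definition odd_count :: "nat set \<Rightarrow> nat" where
  "odd_count H = card {x\<in>H. odd x}"

definition parity_count :: "nat set set \<Rightarrow> nat \<Rightarrow> nat \<Rightarrow> nat" where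
  "parity_count F a b = card {H\<in>F. even_count H = a \<and> odd_count H = b}"

definition add_ends :: "nat \<Rightarrow> nat set \<Rightarrow> nat set" where
  "add_ends n K = insert 0 (insert (2*n+2) (Suc ` K))"

lemma finite_sym_indep: "finite (sym_indep n)"
proof (rule finite_subset)
  show "sym_indep n \<subseteq> Pow {..2*n}"
    by (auto simp: sym_indep_def path_indep_def)
qed simp

lemma sym_indep_0: "sym_indep 0 = {{}, {0}}"
  by (auto simp: sym_indep_def path_indep_def)

lemma image_Suc_in_sym_indep:
  assumes "K \<in> sym_indep n"
  shows "Suc ` K \<in> sym_indep (Suc n)"
proof -
  have "2 * Suc n - Suc x = Suc (2*n - x)" if "x \<in> K" for x
    using assms that by (auto simp: sym_indep_def path_indep_def)
  then show ?thesis
    using assms by (auto simp: sym_indep_def path_indep_def)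
qed

lemma add_ends_in_sym_indep:
  assumes "K \<in> sym_indep n" and "0 \<notin> K"
  shows "add_ends n K \<in> sym_indep (Suc n)"
proof -
  have "2*n \<notin> K"
    using assms by (force simp: sym_indep_def)
  moreover have "2 * Suc n - Suc x = Suc (2*n - x)" if "x \<in> K" for x
    using assms that by (auto simp: sym_indep_def path_indep_def)
  ultimately show ?thesis
    using assms by (auto simp: sym_indep_def path_indep_def add_ends_def)
qed

lemma sym_indep_Suc_cases:
  assumes H: "H \<in> sym_indep (Suc n)"
  obtains K where "K \<in> sym_indep n" "0 \<notin> H" "H = Suc ` K"
    | K where "K \<in> sym_indep n" "0 \<notin> K" "H = add_ends n K"
proof -
  define K where "K = {x. Suc x \<in> H \<and> x \<le> 2*n}"
  have sub: "H \<subseteq> {..2*n+2}" and indep: "\<And>x. x \<in> H \<Longrightarrow> Suc x \<notin> H"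
    and sym: "\<And>x. x \<in> H \<Longrightarrow> 2*n + 2 - x \<in> H"
    using H by (auto simp: sym_indep_def path_indep_def)
  have K: "K \<in> sym_indep n"
  proof -
    have "2*n - x \<in> K" if "x \<in> K" for x
      using sym[of "Suc x"] that by (auto simp: K_def Suc_diff_le)
    then show ?thesis
      using indep by (auto simp: K_def sym_indep_def path_indep_def)
  qed
  have inner: "H - {0, 2*n+2} = Suc ` K"
  proof (intro equalityI subsetI)
    fix y assume "y \<in> H - {0, 2*n+2}"
    then show "y \<in> Suc ` K"
      using sub by (cases y) (auto simp: K_def)
  qed (auto simp: K_def)
  have ends: "0 \<in> H \<longleftrightarrow> 2*n+2 \<in> H"
    using sym[of 0] sym[of "2*n+2"] by auto
  show thesis
  proof (cases "0 \<in> H")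
    case True
    have "H = add_ends n K"
      unfolding add_ends_def inner[symmetric] using True ends by auto
    moreover have "0 \<notin> K"
      using True indep[of 0] by (simp add: K_def)
    ultimately show thesis
      using that(2) K by simp
  next
    case False
    have "H = Suc ` K"
      unfolding inner[symmetric] using False ends by auto
    then show thesis
      using that(1) K False by simp
  qed
qed

lemma sym_indep_Suc:
  "sym_indep (Suc n) = image Suc ` sym_indep n \<union> add_ends n ` {K \<in> sym_indep n. 0 \<notin> K}"
  by (auto elim: sym_indep_Suc_cases intro: image_Suc_in_sym_indep add_ends_in_sym_indep)

lemma sym_indep_Suc_avoiding_0: "{H \<in> sym_indep (Suc n). 0 \<notin> H} = image Suc ` sym_indep n"
  by (auto elim: sym_indep_Suc_cases intro: image_Suc_in_sym_indep simp: add_ends_def)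

lemma inj_on_add_ends: "inj_on (add_ends n) (sym_indep n)"
proof (rule inj_onI)
  fix K L assume "K \<in> sym_indep n" "L \<in> sym_indep n" "add_ends n K = add_ends n L"
  moreover have "add_ends n M - {0, 2*n+2} = Suc ` M" if "M \<in> sym_indep n" for M
    using that by (auto simp: add_ends_def sym_indep_def path_indep_def)
  ultimately have "Suc ` K = Suc ` L" by metis
  then show "K = L" by (simp add: inj_image_eq_iff)
qed

lemma even_count_image_Suc: "even_count (Suc ` K) = odd_count K"
proof -
  have "{x \<in> Suc ` K. even x} = Suc ` {x \<in> K. odd x}" by auto
  then show ?thesis by (simp add: even_count_def odd_count_def card_image)
qed

lemma odd_count_image_Suc: "odd_count (Suc ` K) = even_count K"
proof -
  have "{x \<in> Suc ` K. odd x} = Suc ` {x \<in> K. even x}" by auto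
  then show ?thesis by (simp add: even_count_def odd_count_def card_image)
qed

lemma
  assumes "K \<in> sym_indep n"
  shows even_count_add_ends: "even_count (add_ends n K) = odd_count K + 2"
    and odd_count_add_ends: "odd_count (add_ends n K) = even_count K"
proof -
  have K: "K \<subseteq> {..2*n}" "finite K"
    using assms by (auto simp: sym_indep_def path_indep_def finite_subset)
  have "{x \<in> add_ends n K. even x} = insert 0 (insert (2*n+2) (Suc ` {x \<in> K. odd x}))"
    by (auto simp: add_ends_def)
  moreover have "0 \<notin> Suc ` {x \<in> K. odd x}" "2*n+2 \<notin> Suc ` {x \<in> K. odd x}"
    using K by auto
  ultimately show "even_count (add_ends n K) = odd_count K + 2"
    using K by (simp add: even_count_def odd_count_def card_image)
  have "{x \<in> add_ends n K. odd x} = Suc ` {x \<in> K. even x}"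
    by (auto simp: add_ends_def)
  then show "odd_count (add_ends n K) = even_count K"
    by (simp add: even_count_def odd_count_def card_image)
qed

lemma parity_count_image:
  "inj_on f F \<Longrightarrow> parity_count (f ` F) a b = card {K \<in> F. even_count (f K) = a \<and> odd_count (f K) = b}"
proof -
  assume "inj_on f F"
  moreover have "{H \<in> f ` F. even_count H = a \<and> odd_count H = b}
                 = f ` {K \<in> F. even_count (f K) = a \<and> odd_count (f K) = b}" by auto
  ultimately show ?thesis
    unfolding parity_count_def by (simp add: card_image inj_on_subset)
qed

lemma parity_count_Un:
  "finite F \<Longrightarrow> finite G \<Longrightarrow> F \<inter> G = {} \<Longrightarrow>
   parity_count (F \<union> G) a b = parity_count F a b + parity_count G a b"
  unfolding parity_count_def by (subst card_Un_disjoint[symmetric]) (auto intro: arg_cong[where f=card])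

lemma parity_count_sym_indep_avoiding_0_Suc:
  "parity_count {H \<in> sym_indep (Suc n). 0 \<notin> H} a b = parity_count (sym_indep n) b a"
proof -
  have "inj_on (image Suc) (sym_indep n)"
    by (simp add: inj_on_def inj_image_eq_iff)
  then show ?thesis
    unfolding sym_indep_Suc_avoiding_0 parity_count_image[OF \<open>inj_on _ _\<close>]
    by (simp add: even_count_image_Suc odd_count_image_Suc parity_count_def conj_commute)
qed

lemma parity_count_sym_indep_Suc:
  "parity_count (sym_indep (Suc n)) a b
   = parity_count (sym_indep n) b a
     + (if 2 \<le> a then parity_count {K \<in> sym_indep n. 0 \<notin> K} b (a - 2) else 0)"
proof -
  let ?A = "image Suc ` sym_indep n" and ?B = "add_ends n ` {K \<in> sym_indep n. 0 \<notin> K}"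
  have "?A \<inter> ?B = {}"
    by (auto simp: add_ends_def)
  then have "parity_count (sym_indep (Suc n)) a b = parity_count ?A a b + parity_count ?B a b"
    unfolding sym_indep_Suc by (simp add: parity_count_Un finite_sym_indep)
  moreover have "parity_count ?A a b = parity_count (sym_indep n) b a"
    using parity_count_sym_indep_avoiding_0_Suc sym_indep_Suc_avoiding_0 by simp
  moreover have "parity_count ?B a b = card {K \<in> sym_indep n. 0 \<notin> K \<and> odd_count K + 2 = a \<and> even_count K = b}"
    using inj_on_subset[OF inj_on_add_ends]
    by (auto simp: parity_count_image even_count_add_ends odd_count_add_ends intro!: arg_cong[where f=card])
  moreover have "\<dots> = (if 2 \<le> a then parity_count {K \<in> sym_indep n. 0 \<notin> K} b (a - 2) else 0)"
    by (auto simp: parity_count_def intro!: arg_cong[where f=card])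
  ultimately show ?thesis by simp
qed

lemma parity_count_sym_indep_0:
  "parity_count (sym_indep 0) a b = (if b = 0 \<and> a \<le> 1 then 1 else 0)"
  "parity_count {H \<in> sym_indep 0. 0 \<notin> H} a b = (if a = 0 \<and> b = 0 then 1 else 0)"
proof -
  have "{x \<in> {0::nat}. even x} = {0}" "{x \<in> {0::nat}. odd x} = {}"
    by (auto simp: odd_pos)
  then have counts: "even_count {} = 0" "odd_count {} = 0" "even_count {0} = 1" "odd_count {0} = 0"
    by (simp_all add: even_count_def odd_count_def)
  have "{H \<in> {{}, {0}}. even_count H = a \<and> odd_count H = b}
        = (if b = 0 \<and> a = 0 then {{}} else if b = 0 \<and> a = 1 then {{0}} else {})"
    using counts by auto
  then show "parity_count (sym_indep 0) a b = (if b = 0 \<and> a \<le> 1 then 1 else 0)"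
    by (simp add: parity_count_def sym_indep_0)
  have "{H \<in> {H \<in> {{}, {0}}. 0 \<notin> H}. even_count H = a \<and> odd_count H = b}
        = (if a = 0 \<and> b = 0 then {{}} else {})"
    using counts by auto
  then show "parity_count {H \<in> sym_indep 0. 0 \<notin> H} a b = (if a = 0 \<and> b = 0 then 1 else 0)"
    by (simp add: parity_count_def sym_indep_0)
qed

lemma parity_count_sym_indep:
  "real (parity_count (sym_indep n) a b) = gauss_binom_m1 (n - a) b * gauss_binom_m1 (n + 1 - b) a
   \<and> real (parity_count {H \<in> sym_indep n. 0 \<notin> H} a b)
       = gauss_binom_m1 (n - 1 - b) a * gauss_binom_m1 (n - a) b"
proof (induction n arbitrary: a b)
  case 0
  have "gauss_binom_m1 1 a = (if a \<le> 1 then 1 else 0)"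
    using gauss_binom_m1_diag[of 1] by (auto simp: gauss_binom_m1_eq_0 le_Suc_eq)
  then show ?case
    by (simp add: parity_count_sym_indep_0 gauss_binom_m1_eq_0)
next
  case (Suc n)
  show ?case
    using Suc.IH gauss_binom_m1_product_step[of n a b]
    by (simp add: parity_count_sym_indep_Suc parity_count_sym_indep_avoiding_0_Suc)
qed

section \<open>Perfect matchings of the snake graph\<close>

lemma mem_hedge: "(u, v) \<in> hedge x y \<longleftrightarrow> v = y \<and> (u = x \<or> u = x + 1)"
  unfolding hedge_def by auto

lemma mem_vedge: "(u, v) \<in> vedge x \<longleftrightarrow> u = x \<and> (v = 0 \<or> v = 1)"
  unfolding vedge_def by auto

lemma hedge_eq_iff [simp]: "hedge a y = hedge b z \<longleftrightarrow> a = b \<and> y = z"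
  by (metis mem_hedge add_right_cancel nat_neq_iff not_add_less1)

lemma vedge_eq_iff [simp]: "vedge a = vedge b \<longleftrightarrow> a = b"
  by (metis mem_vedge)

lemma hedge_neq_vedge [simp]: "hedge a y \<noteq> vedge b" "vedge b \<noteq> hedge a y"
  by (metis mem_hedge mem_vedge n_not_Suc_n Suc_eq_plus1)+

lemma verts_iff [simp]: "(x, y) \<in> verts n \<longleftrightarrow> x \<le> 2*n+1 \<and> y \<le> 1"
  unfolding verts_def by simp

lemma hedge_in_edges: "hedge x y \<in> edges n \<longleftrightarrow> x \<le> 2*n \<and> y \<le> 1"
  unfolding edges_def by auto

lemma vedge_in_edges: "vedge x \<in> edges n \<longleftrightarrow> x \<le> 2*n+1"
  unfolding edges_def by auto

lemma edge_at_vertex: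
  assumes "e \<in> edges n" "(x, y) \<in> e"
  shows "e = hedge x y \<or> (0 < x \<and> e = hedge (x - 1) y) \<or> e = vedge x"
  using assms unfolding edges_def by (auto simp: mem_hedge mem_vedge)

lemma perfect_matching_unique:
  "perfect_matching n P \<Longrightarrow> v \<in> verts n \<Longrightarrow> e \<in> P \<Longrightarrow> e' \<in> P \<Longrightarrow> v \<in> e \<Longrightarrow> v \<in> e' \<Longrightarrow> e = e'"
  unfolding perfect_matching_def by blast

lemma perfect_matching_covers: "perfect_matching n P \<Longrightarrow> v \<in> verts n \<Longrightarrow> \<exists>e\<in>P. v \<in> e"
  unfolding perfect_matching_def by blast

lemma perfect_matching_edge: "perfect_matching n P \<Longrightarrow> e \<in> P \<Longrightarrow> e \<in> edges n"
  unfolding perfect_matching_def by blast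

text \<open>The vertex \<open>(x, 1 - y)\<close> cannot be matched vertically, since that edge contains \<open>(x, y)\<close>,
  nor by \<open>hedge (x - 1) (1 - y)\<close>, since by induction \<open>hedge (x - 1) y\<close> would then contain
  \<open>(x, y)\<close> as well.\<close>
lemma perfect_matching_hedge_pair:
  assumes pm: "perfect_matching n P" and "y \<le> 1" and "hedge x y \<in> P"
  shows "hedge x (1 - y) \<in> P"
  using assms(2,3)
proof (induction x arbitrary: y rule: less_induct)
  case (less x)
  have x: "x \<le> 2*n"
    using perfect_matching_edge[OF pm less.prems(2)] by (simp add: hedge_in_edges)
  have vx: "(x, y) \<in> verts n" "(x, 1 - y) \<in> verts n"
    using x less.prems(1) by auto
  obtain e where e: "e \<in> P" "(x, 1 - y) \<in> e"
    using perfect_matching_covers[OF pm vx(2)] by blast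
  have at_xy: "e = hedge x y" if "e \<in> P" "(x, y) \<in> e" for e
    using perfect_matching_unique[OF pm vx(1) that(1) less.prems(2) that(2)] by (simp add: mem_hedge)
  consider "e = hedge x (1 - y)" | "0 < x" "e = hedge (x - 1) (1 - y)" | "e = vedge x"
    using edge_at_vertex[OF perfect_matching_edge[OF pm e(1)] e(2)] by blast
  then show ?case
  proof cases
    case 1
    then show ?thesis using e by simp
  next
    case 2
    then have "hedge (x - 1) y \<in> P"
      using less.IH[of "x - 1" "1 - y"] e less.prems(1) by simp
    then show ?thesis
      using at_xy[of "hedge (x - 1) y"] 2 by (simp add: mem_hedge)
  next
    case 3
    then have "(x, y) \<in> e"
      using less.prems(1) by (auto simp: mem_vedge)
    then show ?thesis
      using at_xy e(1) 3 by fastforce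
  qed
qed

definition covered :: "nat set \<Rightarrow> nat \<Rightarrow> bool" where
  "covered H x \<longleftrightarrow> x \<in> H \<or> (0 < x \<and> x - 1 \<in> H)"

definition matching_of :: "nat \<Rightarrow> nat set \<Rightarrow> edge set" where
  "matching_of n H = {hedge x y | x y. x \<in> H \<and> y \<le> 1} \<union> {vedge x | x. x \<le> 2*n+1 \<and> \<not> covered H x}"

definition hedge_positions :: "edge set \<Rightarrow> nat set" where
  "hedge_positions P = {x. hedge x 0 \<in> P}"

lemma hedge_in_matching_of: "hedge x y \<in> matching_of n H \<longleftrightarrow> x \<in> H \<and> y \<le> 1"
  unfolding matching_of_def by auto

lemma vedge_in_matching_of: "vedge x \<in> matching_of n H \<longleftrightarrow> x \<le> 2*n+1 \<and> \<not> covered H x"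
  unfolding matching_of_def by auto

lemma hedge_positions_matching_of: "hedge_positions (matching_of n H) = H"
  unfolding hedge_positions_def by (simp add: hedge_in_matching_of)

lemma matching_of_subset_edges: "path_indep n H \<Longrightarrow> matching_of n H \<subseteq> edges n"
  unfolding matching_of_def path_indep_def by (auto simp: hedge_in_edges vedge_in_edges)

lemma matching_of_at_vertex:
  assumes H: "path_indep n H" and v: "(x, y) \<in> verts n"
  shows "e \<in> matching_of n H \<and> (x, y) \<in> e \<longleftrightarrow>
     e = (if x \<in> H then hedge x y else if 0 < x \<and> x - 1 \<in> H then hedge (x - 1) y else vedge x)"
    (is "_ \<longleftrightarrow> e = ?e")
proof
  have not_both: "x - 1 \<notin> H" if "x \<in> H" "0 < x"
  proof
    assume "x - 1 \<in> H"
    then have "Suc (x - 1) \<notin> H" using H unfolding path_indep_def by blast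
    then show False using that by simp
  qed
  assume e: "e \<in> matching_of n H \<and> (x, y) \<in> e"
  then consider "e = hedge x y" | "0 < x" "e = hedge (x - 1) y" | "e = vedge x"
    using edge_at_vertex[of e n x y] matching_of_subset_edges[OF H] by blast
  then show "e = ?e"
  proof cases
    case 1
    then have "x \<in> H" using e by (simp add: hedge_in_matching_of)
    then show ?thesis using 1 by simp
  next
    case 2
    then have "x - 1 \<in> H" using e by (simp add: hedge_in_matching_of)
    then show ?thesis using 2 not_both by auto
  next
    case 3
    then have "\<not> covered H x" using e by (simp add: vedge_in_matching_of)
    then show ?thesis using 3 unfolding covered_def by auto
  qed
next
  assume e: "e = ?e"
  have y: "y \<le> 1" "x \<le> 2*n+1" using v by auto
  consider "x \<in> H" | "x \<notin> H" "0 < x \<and> x - 1 \<in> H" | "\<not> covered H x"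
    unfolding covered_def by blast
  then show "e \<in> matching_of n H \<and> (x, y) \<in> e"
  proof cases
    case 1
    then show ?thesis using e y by (simp add: hedge_in_matching_of mem_hedge)
  next
    case 2
    then show ?thesis using e y by (simp add: hedge_in_matching_of mem_hedge)
  next
    case 3
    then have "e = vedge x" using e unfolding covered_def by auto
    then show ?thesis using 3 y by (auto simp: vedge_in_matching_of mem_vedge)
  qed
qed

lemma perfect_matching_matching_of:
  assumes "path_indep n H"
  shows "perfect_matching n (matching_of n H)"
  unfolding perfect_matching_def
proof (intro conjI ballI)
  show "matching_of n H \<subseteq> edges n"
    using matching_of_subset_edges[OF assms] .
  fix v assume "v \<in> verts n"
  then obtain x y where "v = (x, y)" "(x, y) \<in> verts n" by (cases v) auto
  then show "\<exists>!e. e \<in> matching_of n H \<and> v \<in> e"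
    using matching_of_at_vertex[OF assms] by auto
qed

lemma path_indep_hedge_positions:
  assumes pm: "perfect_matching n P"
  shows "path_indep n (hedge_positions P)"
  unfolding path_indep_def
proof (intro conjI ballI subsetI)
  fix x assume "x \<in> hedge_positions P"
  then have "hedge x 0 \<in> edges n"
    using perfect_matching_edge[OF pm] by (simp add: hedge_positions_def)
  then show "x \<in> {..2*n}"
    by (simp add: hedge_in_edges)
next
  fix x assume x: "x \<in> hedge_positions P"
  show "Suc x \<notin> hedge_positions P"
  proof
    assume "Suc x \<in> hedge_positions P"
    then have h: "hedge x 0 \<in> P" "hedge (Suc x) 0 \<in> P"
      using x by (simp_all add: hedge_positions_def)
    have "(Suc x, 0) \<in> verts n"
      using perfect_matching_edge[OF pm h(2)] by (simp add: hedge_in_edges)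
    moreover have "(Suc x, 0) \<in> hedge x 0" "(Suc x, 0) \<in> hedge (Suc x) 0"
      by (simp_all add: mem_hedge)
    ultimately have "hedge x 0 = hedge (Suc x) 0"
      using perfect_matching_unique[OF pm _ h] by blast
    then show False by simp
  qed
qed

lemma perfect_matching_hedge_iff:
  assumes pm: "perfect_matching n P"
  shows "hedge x y \<in> P \<longleftrightarrow> x \<in> hedge_positions P \<and> y \<le> 1"
proof
  assume h: "hedge x y \<in> P"
  then have "y \<le> 1"
    using perfect_matching_edge[OF pm h] by (simp add: hedge_in_edges)
  then show "x \<in> hedge_positions P \<and> y \<le> 1"
    using perfect_matching_hedge_pair[OF pm _ h] h by (cases y) (auto simp: hedge_positions_def)
next
  assume "x \<in> hedge_positions P \<and> y \<le> 1"
  then show "hedge x y \<in> P"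
    using perfect_matching_hedge_pair[OF pm, of 0 x] by (cases y) (auto simp: hedge_positions_def)
qed

lemma perfect_matching_vedge_iff:
  assumes pm: "perfect_matching n P"
  shows "vedge x \<in> P \<longleftrightarrow> x \<le> 2*n+1 \<and> \<not> covered (hedge_positions P) x"
proof
  assume v: "vedge x \<in> P"
  then have x: "x \<le> 2*n+1"
    using perfect_matching_edge[OF pm v] by (simp add: vedge_in_edges)
  have "e = vedge x" if "e \<in> P" "(x, 0) \<in> e" for e
    using perfect_matching_unique[OF pm _ that(1) v that(2)] x by (simp add: mem_vedge)
  then show "x \<le> 2*n+1 \<and> \<not> covered (hedge_positions P) x"
    using x by (fastforce simp: covered_def hedge_positions_def mem_hedge)
next
  assume x: "x \<le> 2*n+1 \<and> \<not> covered (hedge_positions P) x"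
  then obtain e where e: "e \<in> P" "(x, 0) \<in> e"
    using perfect_matching_covers[OF pm, of "(x, 0)"] by auto
  then show "vedge x \<in> P"
    using edge_at_vertex[OF perfect_matching_edge[OF pm e(1)] e(2)] x
    by (auto simp: covered_def hedge_positions_def)
qed

lemma matching_of_hedge_positions:
  assumes pm: "perfect_matching n P"
  shows "matching_of n (hedge_positions P) = P"
proof (intro equalityI subsetI)
  fix e assume "e \<in> matching_of n (hedge_positions P)"
  then show "e \<in> P"
    unfolding matching_of_def
    using perfect_matching_hedge_iff[OF pm] perfect_matching_vedge_iff[OF pm] by auto
next
  fix e assume e: "e \<in> P"
  then consider x y where "e = hedge x y" | x where "e = vedge x"
    using perfect_matching_edge[OF pm] unfolding edges_def by blast
  then show "e \<in> matching_of n (hedge_positions P)"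
    using e perfect_matching_hedge_iff[OF pm] perfect_matching_vedge_iff[OF pm]
    by cases (auto simp: hedge_in_matching_of vedge_in_matching_of)
qed

section \<open>Twisted tiles and reflection\<close>

lemma hedge_in_Pmin: "hedge x y \<in> Pmin n \<longleftrightarrow> x \<le> 2*n \<and> y \<le> 1 \<and> even x"
  unfolding Pmin_def face_weight_def by auto

lemma vedge_notin_Pmin: "vedge x \<notin> Pmin n"
  unfolding Pmin_def by auto

lemma block_cycle_subset_iff:
  "block_cycle a b \<subseteq> S \<longleftrightarrow>
   vedge a \<in> S \<and> vedge (b + 1) \<in> S \<and> (\<forall>x y. a \<le> x \<and> x \<le> b \<and> y \<le> 1 \<longrightarrow> hedge x y \<in> S)"
  unfolding block_cycle_def by blast

lemma hedge_in_symdiff_matching_of: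
  "x \<le> 2*n \<Longrightarrow> y \<le> 1 \<Longrightarrow>
   hedge x y \<in> symdiff (matching_of n H) (Pmin n) \<longleftrightarrow> (x \<in> H \<longleftrightarrow> odd x)"
  unfolding symdiff_def by (auto simp: hedge_in_matching_of hedge_in_Pmin)

lemma vedge_in_symdiff_matching_of:
  "vedge x \<in> symdiff (matching_of n H) (Pmin n) \<longleftrightarrow> x \<le> 2*n+1 \<and> \<not> covered H x"
  unfolding symdiff_def by (auto simp: vedge_in_matching_of vedge_notin_Pmin)

text \<open>The property \<open>x \<in> H \<longleftrightarrow> odd x\<close> of tiles propagates across every covered vertical line,
  so a maximal run of such tiles is bounded by two vertical edges of \<open>matching_of n H\<close> and
  hence forms a cycle of \<open>matching_of n H \<triangle> Pmin n\<close>.\<close>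
lemma covered_Suc_parity:
  assumes "path_indep n H" "covered H (Suc x)"
  shows "(x \<in> H \<longleftrightarrow> odd x) \<longleftrightarrow> (Suc x \<in> H \<longleftrightarrow> odd (Suc x))"
  using assms unfolding path_indep_def covered_def by auto

lemma twisted_run_left:
  assumes H: "path_indep n H"
  shows "(t \<in> H \<longleftrightarrow> odd t) \<Longrightarrow>
    \<exists>a\<le>t. \<not> covered H a \<and> (\<forall>x. a \<le> x \<and> x \<le> t \<longrightarrow> (x \<in> H \<longleftrightarrow> odd x))"
proof (induction t)
  case 0
  then show ?case by (auto simp: covered_def)
next
  case (Suc t)
  show ?case
  proof (cases "covered H (Suc t)")
    case True
    then obtain a where "a \<le> t" "\<not> covered H a" "\<forall>x. a \<le> x \<and> x \<le> t \<longrightarrow> (x \<in> H \<longleftrightarrow> odd x)"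
      using Suc covered_Suc_parity[OF H] by blast
    then show ?thesis
      using Suc.prems by (metis le_SucE le_SucI)
  next
    case False
    then show ?thesis
      using Suc.prems by (metis le_antisym order_refl)
  qed
qed

lemma twisted_run_right:
  assumes H: "path_indep n H"
  shows "t \<le> 2*n \<Longrightarrow> (t \<in> H \<longleftrightarrow> odd t) \<Longrightarrow>
    \<exists>b. t \<le> b \<and> b \<le> 2*n \<and> \<not> covered H (Suc b) \<and> (\<forall>x. t \<le> x \<and> x \<le> b \<longrightarrow> (x \<in> H \<longleftrightarrow> odd x))"
proof (induction "2*n - t" arbitrary: t)
  case 0
  then have "t = 2*n" "Suc t \<notin> H" "t \<notin> H"
    using H by (auto simp: path_indep_def)
  then show ?case
    by (intro exI[of _ t]) (auto simp: covered_def)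
next
  case (Suc k)
  show ?case
  proof (cases "covered H (Suc t)")
    case True
    have "k = 2*n - Suc t" "Suc t \<le> 2*n"
      using Suc.hyps(2) by auto
    moreover have "Suc t \<in> H \<longleftrightarrow> odd (Suc t)"
      using covered_Suc_parity[OF H True] Suc.prems(2) by simp
    ultimately obtain b where "Suc t \<le> b" "b \<le> 2*n" "\<not> covered H (Suc b)"
        "\<forall>x. Suc t \<le> x \<and> x \<le> b \<longrightarrow> (x \<in> H \<longleftrightarrow> odd x)"
      using Suc.hyps(1) by blast
    then show ?thesis
      using Suc.prems by (metis Suc_leD Suc_leI le_neq_implies_less)
  next
    case False
    then show ?thesis
      using Suc.prems by (metis le_antisym order_refl)
  qed
qed

lemma Twist_matching_of:
  assumes H: "path_indep n H"
  shows "Twist n (matching_of n H) = {t. t \<le> 2*n \<and> (t \<in> H \<longleftrightarrow> odd t)}"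
proof (intro equalityI subsetI)
  fix t assume "t \<in> Twist n (matching_of n H)"
  then obtain a b where "t \<le> 2*n" "a \<le> t" "t \<le> b"
      "block_cycle a b \<subseteq> symdiff (matching_of n H) (Pmin n)"
    unfolding Twist_def by blast
  then show "t \<in> {t. t \<le> 2*n \<and> (t \<in> H \<longleftrightarrow> odd t)}"
    using hedge_in_symdiff_matching_of[of t n 0 H] by (simp add: block_cycle_subset_iff)
next
  fix t assume "t \<in> {t. t \<le> 2*n \<and> (t \<in> H \<longleftrightarrow> odd t)}"
  then have t: "t \<le> 2*n" "t \<in> H \<longleftrightarrow> odd t" by auto
  obtain a where a: "a \<le> t" "\<not> covered H a" "\<forall>x. a \<le> x \<and> x \<le> t \<longrightarrow> (x \<in> H \<longleftrightarrow> odd x)"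
    using twisted_run_left[OF H t(2)] by blast
  obtain b where b: "t \<le> b" "b \<le> 2*n" "\<not> covered H (Suc b)"
      "\<forall>x. t \<le> x \<and> x \<le> b \<longrightarrow> (x \<in> H \<longleftrightarrow> odd x)"
    using twisted_run_right[OF H t] by blast
  have "x \<in> H \<longleftrightarrow> odd x" if "a \<le> x" "x \<le> b" for x
    using a(3) b(4) that by (cases "x \<le> t") auto
  then have "block_cycle a b \<subseteq> symdiff (matching_of n H) (Pmin n)"
    using a b t hedge_in_symdiff_matching_of[of _ n _ H]
    by (simp add: block_cycle_subset_iff vedge_in_symdiff_matching_of)
  then show "t \<in> Twist n (matching_of n H)"
    unfolding Twist_def using t a b by blast
qed

lemma card_even_le: "card {t::nat. t \<le> 2*n \<and> even t} = n + 1"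
proof -
  have "{t::nat. t \<le> 2*n \<and> even t} = (\<lambda>k. 2*k) ` {..n}"
    by (auto elim!: evenE)
  then show ?thesis
    by (simp add: card_image inj_on_def)
qed

lemma even_count_le:
  assumes "path_indep n H"
  shows "even_count H \<le> n + 1"
proof -
  have "{x \<in> H. even x} \<subseteq> {t. t \<le> 2*n \<and> even t}"
    using assms by (auto simp: path_indep_def)
  then show ?thesis
    unfolding even_count_def card_even_le[symmetric] by (intro card_mono) auto
qed

lemma y_count_1_matching_of:
  assumes "path_indep n H"
  shows "y_count n 1 (matching_of n H) = n + 1 - even_count H"
proof -
  have sub: "{x \<in> H. even x} \<subseteq> {t. t \<le> 2*n \<and> even t}"
    using assms by (auto simp: path_indep_def)
  have "{t \<in> Twist n (matching_of n H). face_weight t = 1} = {t. t \<le> 2*n \<and> even t} - {x \<in> H. even x}"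
    by (auto simp: Twist_matching_of[OF assms] face_weight_def)
  then show ?thesis
    using sub by (simp add: y_count_def even_count_def card_Diff_subset card_even_le finite_subset)
qed

lemma y_count_2_matching_of:
  assumes "path_indep n H"
  shows "y_count n 2 (matching_of n H) = odd_count H"
proof -
  have "{t \<in> Twist n (matching_of n H). face_weight t = 2} = {x \<in> H. odd x}"
    using assms by (auto simp: Twist_matching_of[OF assms] face_weight_def path_indep_def)
  then show ?thesis by (simp add: y_count_def odd_count_def)
qed

definition mirror :: "nat \<Rightarrow> vert \<Rightarrow> vert" where
  "mirror n = (\<lambda>(x, y). (2*n+1 - x, y))"

lemma reflect_eq: "reflect n P = image (mirror n) ` P"
  unfolding reflect_def mirror_def by simp

lemma mirror_hedge: "x \<le> 2*n \<Longrightarrow> mirror n ` hedge x y = hedge (2*n - x) y"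
  unfolding mirror_def hedge_def by auto

lemma mirror_vedge: "mirror n ` vedge x = vedge (2*n+1 - x)"
  unfolding mirror_def vedge_def by auto

lemma covered_reflect:
  assumes H: "H \<subseteq> {..2*n}" and x: "x \<le> 2*n+1"
  shows "covered ((\<lambda>x. 2*n - x) ` H) (2*n+1 - x) \<longleftrightarrow> covered H x"
proof -
  let ?R = "\<lambda>x. 2*n - x"
  have R_mem: "2*n - u \<in> ?R ` H \<longleftrightarrow> u \<in> H" if "u \<le> 2*n" for u
  proof
    assume "2*n - u \<in> ?R ` H"
    then obtain h where h: "h \<in> H" "2*n - u = 2*n - h" by blast
    moreover have "h \<le> 2*n" using H h(1) by auto
    ultimately show "u \<in> H" using that by (metis diff_diff_cancel)
  qed auto
  have "2*n+1 - x \<in> ?R ` H \<longleftrightarrow> 0 < x \<and> x - 1 \<in> H"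
    using R_mem[of "x - 1"] H x by (cases x) auto
  moreover have "2*n - x \<in> ?R ` H \<longleftrightarrow> x \<in> H" if "x \<le> 2*n"
    using R_mem that by blast
  ultimately show ?thesis
    using H x unfolding covered_def by (cases "x = 2*n+1") auto
qed

lemma reflect_matching_of:
  assumes "path_indep n H"
  shows "reflect n (matching_of n H) = matching_of n ((\<lambda>x. 2*n - x) ` H)"
proof -
  let ?R = "\<lambda>x. 2*n - x"
  have H: "H \<subseteq> {..2*n}"
    using assms by (simp add: path_indep_def)
  have "image (mirror n) ` {hedge x y | x y. x \<in> H \<and> y \<le> 1} = {hedge x y | x y. x \<in> ?R ` H \<and> y \<le> 1}"
  proof (intro equalityI subsetI)
    fix e assume "e \<in> image (mirror n) ` {hedge x y | x y. x \<in> H \<and> y \<le> 1}"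
    then show "e \<in> {hedge x y | x y. x \<in> ?R ` H \<and> y \<le> 1}"
      using H by (auto simp: mirror_hedge subset_iff)
  next
    fix e assume "e \<in> {hedge x y | x y. x \<in> ?R ` H \<and> y \<le> 1}"
    then obtain h y where h: "h \<in> H" "y \<le> 1" "e = hedge (2*n - h) y" by blast
    moreover have "h \<le> 2*n" using H h(1) by auto
    then have "e = mirror n ` hedge h y"
      using h(3) by (simp add: mirror_hedge)
    ultimately show "e \<in> image (mirror n) ` {hedge x y | x y. x \<in> H \<and> y \<le> 1}"
      by blast
  qed
  moreover have "image (mirror n) ` {vedge x | x. x \<le> 2*n+1 \<and> \<not> covered H x}
                 = {vedge x | x. x \<le> 2*n+1 \<and> \<not> covered (?R ` H) x}"
  proof (intro equalityI subsetI)
    fix e assume "e \<in> image (mirror n) ` {vedge x | x. x \<le> 2*n+1 \<and> \<not> covered H x}"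
    then show "e \<in> {vedge x | x. x \<le> 2*n+1 \<and> \<not> covered (?R ` H) x}"
      using covered_reflect[OF H] by (auto simp: mirror_vedge)
  next
    fix e assume "e \<in> {vedge x | x. x \<le> 2*n+1 \<and> \<not> covered (?R ` H) x}"
    then obtain u where "e = vedge u" "u \<le> 2*n+1" "\<not> covered (?R ` H) u" by blast
    moreover have "e = mirror n ` vedge (2*n+1 - u)"
      using calculation by (simp add: mirror_vedge)
    ultimately show "e \<in> image (mirror n) ` {vedge x | x. x \<le> 2*n+1 \<and> \<not> covered H x}"
      using covered_reflect[OF H, of "2*n+1 - u"] by force
  qed
  ultimately show ?thesis
    unfolding reflect_eq matching_of_def image_Un by simp
qed

lemma reflect_matching_of_eq_iff:
  assumes "path_indep n H"
  shows "reflect n (matching_of n H) = matching_of n H \<longleftrightarrow> (\<forall>x\<in>H. 2*n - x \<in> H)"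
proof -
  have H: "H \<subseteq> {..2*n}"
    using assms by (simp add: path_indep_def)
  have "reflect n (matching_of n H) = matching_of n H \<longleftrightarrow> (\<lambda>x. 2*n - x) ` H = H"
    unfolding reflect_matching_of[OF assms] by (metis hedge_positions_matching_of)
  also have "\<dots> \<longleftrightarrow> (\<forall>x\<in>H. 2*n - x \<in> H)"
  proof
    assume "\<forall>x\<in>H. 2*n - x \<in> H"
    moreover have "x = 2*n - (2*n - x)" if "x \<in> H" for x
      using H that by auto
    ultimately show "(\<lambda>x. 2*n - x) ` H = H"
      by (auto simp: image_iff)
  qed auto
  finally show ?thesis .
qed

lemma reflection_fixed_points:
  assumes "r \<le> n"
  shows "{P \<in> Match n p r. reflect n P = P}
         = matching_of n ` {H \<in> sym_indep n. even_count H = r \<and> odd_count H = p}"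
proof (intro equalityI subsetI)
  fix P assume "P \<in> {P \<in> Match n p r. reflect n P = P}"
  then have pm: "perfect_matching n P" and y: "y_count n 1 P = n + 1 - r" "y_count n 2 P = p"
    and fixed: "reflect n P = P" by (auto simp: Match_def)
  define H where "H = hedge_positions P"
  have H: "path_indep n H" and P: "P = matching_of n H"
    using path_indep_hedge_positions[OF pm] matching_of_hedge_positions[OF pm] by (simp_all add: H_def)
  have "even_count H = r"
    using y(1) y_count_1_matching_of[OF H] even_count_le[OF H] assms P by simp
  moreover have "odd_count H = p"
    using y(2) y_count_2_matching_of[OF H] P by simp
  moreover have "\<forall>x\<in>H. 2*n - x \<in> H"
    using fixed reflect_matching_of_eq_iff[OF H] P by simp
  ultimately show "P \<in> matching_of n ` {H \<in> sym_indep n. even_count H = r \<and> odd_count H = p}"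
    using H P by (auto simp: sym_indep_def)
next
  fix P assume "P \<in> matching_of n ` {H \<in> sym_indep n. even_count H = r \<and> odd_count H = p}"
  then obtain H where H: "path_indep n H" "\<forall>x\<in>H. 2*n - x \<in> H"
    and counts: "even_count H = r" "odd_count H = p" and P: "P = matching_of n H"
    by (auto simp: sym_indep_def)
  have "perfect_matching n P" "reflect n P = P"
    using P H perfect_matching_matching_of reflect_matching_of_eq_iff by simp_all
  moreover have "y_count n 1 P = n + 1 - r" "y_count n 2 P = p"
    using P counts y_count_1_matching_of[OF H(1)] y_count_2_matching_of[OF H(1)] by simp_all
  ultimately show "P \<in> {P \<in> Match n p r. reflect n P = P}"
    by (simp add: Match_def)
qed

theorem mainTheorem11:
  fixes p r n :: nat
  assumes "p + r \<le> n"
  shows "gauss_binom_m1 (n - r) p * gauss_binom_m1 (n + 1 - p) r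
           = real (card {P \<in> Match n p r. reflect n P = P})"
proof -
  have "inj_on (matching_of n) {H \<in> sym_indep n. even_count H = r \<and> odd_count H = p}"
    by (rule inj_on_inverseI[where g = hedge_positions]) (simp add: hedge_positions_matching_of)
  then have "card {P \<in> Match n p r. reflect n P = P} = parity_count (sym_indep n) r p"
    using assms by (simp add: reflection_fixed_points card_image parity_count_def)
  then show ?thesis
    using parity_count_sym_indep[of n r p] by simp
qed

end
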